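(* Consider the Ising channel with ternary alphabet $\mathcal{X}=\mathcal{Y}=\mathcal{S}=\{0,1,2\}$ (defined in the context), used with noiseless causal output feedback. Its feedback capacity is $$C_{fb} = \max_{p \in [0,1]} 2\,\frac{H_2(p) + 1-p}{p+3},$$ and numerically $C_{fb} \approx 0.961227$, attained at $p \approx 0.263805$.
   Context: The Ising channel with alphabet $\mathcal{X}$ is a finite-state channel with input $X_t\in\mathcal{X}$, output $Y_t\in\mathcal{X}$ and state $S_{t-1}\in\mathcal{X}$. At each time $t$, given the current input $x_t$, the state $s_{t-1}$ and all the past, the output is $Y_t=x_t$ with probability $1/2$ and $Y_t=s_{t-1}$ with probability $1/2$, independently of everything else. The state then updates as $S_t=X_t$. In particular, if $x_t=s_{t-1}$ then $Y_t=x_t$ with probability $1$. The initial state $s_0$ is known to both encoder and decoder. In the feedback setting, the encoder chooses $x_t$ as a function of the message and the past outputs $y^{t-1}=(y_1,\dots,y_{t-1})$. The feedback capacity $C_{fb}$ is the supremum of achievable rates, in bits per channel use, with vanishing error probability. $H_2(p)=-p\log_2 p-(1-p)\log_2(1-p)$ is the binary entropy function. *)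

theory Defs
  imports "HOL-Analysis.Analysis"
begin

text \<open>Binary entropy in bits (log 2 0 = 0 in Isabelle, so H2 0 = H2 1 = 0).\<close>
definition H2 :: "real \<Rightarrow> real" where
  "H2 p = - p * log 2 p - (1 - p) * log 2 (1 - p)"

definition alph :: "nat set" where "alph = {0, 1, 2}"

text \<open>Ising channel law: probability of output y given input x and state s.
  Y = x w.p. 1/2 and Y = s w.p. 1/2 (so Y = x w.p. 1 if x = s).\<close>
definition ising_W :: "nat \<Rightarrow> nat \<Rightarrow> nat \<Rightarrow> real" where
  "ising_W s x y = (if y = x then 1/2 else 0) + (if y = s then 1/2 else 0)"

text \<open>A feedback encoder maps a message m and the past outputs y^{t-1}
  (a list of length t-1) to the channel input x_t.\<close>
type_synonym fb_encoder = "nat \<Rightarrow> nat list \<Rightarrow> nat"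
type_synonym decoder = "nat list \<Rightarrow> nat"

text \<open>Input at time t+1 (0-indexed t) under feedback.\<close>
definition fb_input :: "fb_encoder \<Rightarrow> nat \<Rightarrow> nat list \<Rightarrow> nat \<Rightarrow> nat" where
  "fb_input e m ys t = e m (take t ys)"

text \<open>Channel state before the (t+1)-th use: S_0 = s0, S_t = X_t.\<close>
definition fb_state :: "fb_encoder \<Rightarrow> nat \<Rightarrow> nat \<Rightarrow> nat list \<Rightarrow> nat \<Rightarrow> nat" where
  "fb_state e s0 m ys t = (if t = 0 then s0 else fb_input e m ys (t - 1))"

definition out_prob :: "fb_encoder \<Rightarrow> nat \<Rightarrow> nat \<Rightarrow> nat list \<Rightarrow> real" where
  "out_prob e s0 m ys =
     (\<Prod>t<length ys. ising_W (fb_state e s0 m ys t) (fb_input e m ys t) (ys ! t))"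

definition out_seqs :: "nat \<Rightarrow> nat list set" where
  "out_seqs n = {ys. length ys = n \<and> set ys \<subseteq> alph}"

definition avg_err :: "nat \<Rightarrow> nat \<Rightarrow> nat \<Rightarrow> fb_encoder \<Rightarrow> decoder \<Rightarrow> real" where
  "avg_err s0 n M e d =
     (1 / real M) * (\<Sum>m<M. \<Sum>ys\<in>out_seqs n. if d ys = m then 0 else out_prob e s0 m ys)"

definition valid_encoder :: "fb_encoder \<Rightarrow> bool" where
  "valid_encoder e \<longleftrightarrow> (\<forall>m ys. e m ys \<in> alph)"

definition achievable :: "nat \<Rightarrow> real \<Rightarrow> bool" where
  "achievable s0 R \<longleftrightarrow> R \<ge> 0 \<and>
     (\<forall>\<epsilon>>0. \<exists>N. \<forall>n\<ge>N. \<exists>M e d. M \<ge> 1 \<and> real M \<ge> 2 powr (real n * R) \<and>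
        valid_encoder e \<and> avg_err s0 n M e d \<le> \<epsilon>)"

definition fb_capacity :: "nat \<Rightarrow> real" where
  "fb_capacity s0 = Sup {R. achievable s0 R}"

definition ising3_rate :: "real \<Rightarrow> real" where
  "ising3_rate p = 2 * (H2 p + 1 - p) / (p + 3)"

end

theory Submission
  imports Defs "HOL-Library.Sublist"
begin

text \<open>
  Let \<open>\<rho> \<in> (0,1)\<close> be the root of \<open>\<rho>\<^sup>4 + 2\<rho>\<^sup>3 = 1\<close> and \<open>C = -2 log\<^sub>2 \<rho>\<close>.
  Gibbs' inequality against the distribution \<open>(\<rho>\<^sup>4, 2\<rho>\<^sup>3)\<close> shows that the rate
  expression attains its maximum \<open>C\<close> at \<open>p = \<rho>\<^sup>4\<close>.

  Converse: compare the output law of a feedback code with an auxiliary Markov output law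
  \<open>Q\<close> whose state is the last output together with a repetition flag. Up to a bounded
  potential, \<open>log\<^sub>2 P(y\<^sup>n|m) - log\<^sub>2 Q(y\<^sup>n) - nC\<close> is a sum of bounded increments with
  nonpositive conditional mean, so by Chebyshev's inequality for its martingale part it
  exceeds \<open>n\<delta>\<close> only with probability \<open>O(1/n)\<close>; a hypothesis-testing bound then keeps the
  error probability of codes of rate \<open>C + 2\<delta>\<close> away from zero.

  Achievability: the messages are the maximal words over \<open>{0,1,2}\<close> of cost at most \<open>L\<close>
  (cost 4 for the symbol 0, cost 3 otherwise), of which there are at least
  \<open>\<rho>^(4 - L) = 2^((L - 4) C / 2)\<close>. The encoder sends a word as differences mod 3
  of successive outputs. Half the cost is the expected number of channel uses per symbol, so
  the cost decoded so far grows by 2 per use in conditional mean, and Chebyshev's inequality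
  again shows that the whole word is decoded within \<open>n\<close> uses once \<open>L \<le> 2n(1 - \<eta>)\<close>.
\<close>

section \<open>The output process of a feedback code\<close>

definition next_state :: "fb_encoder \<Rightarrow> nat \<Rightarrow> nat \<Rightarrow> nat list \<Rightarrow> nat" where
  "next_state e s0 m ys = (if ys = [] then s0 else e m (butlast ys))"

abbreviation next_W :: "fb_encoder \<Rightarrow> nat \<Rightarrow> nat \<Rightarrow> nat list \<Rightarrow> nat \<Rightarrow> real" where
  "next_W e s0 m ys \<equiv> ising_W (next_state e s0 m ys) (e m ys)"

lemma out_prob_Nil [simp]: "out_prob e s0 m [] = 1"
  by (simp add: out_prob_def)

lemma out_prob_snoc:
  "out_prob e s0 m (ys @ [y]) = out_prob e s0 m ys * next_W e s0 m ys y"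
proof -
  have prefix_stable: "fb_state e s0 m (ys @ [y]) t = fb_state e s0 m ys t"
    "fb_input e m (ys @ [y]) t = fb_input e m ys t" if "t \<le> length ys" for t
    using that by (auto simp: fb_state_def fb_input_def)
  have last: "fb_state e s0 m (ys @ [y]) (length ys) = next_state e s0 m ys"
    "fb_input e m (ys @ [y]) (length ys) = e m ys"
    by (auto simp: fb_state_def fb_input_def next_state_def butlast_conv_take)
  have "(\<Prod>t<length ys. ising_W (fb_state e s0 m (ys @ [y]) t) (fb_input e m (ys @ [y]) t) ((ys @ [y]) ! t))
      = out_prob e s0 m ys"
    unfolding out_prob_def by (rule prod.cong) (simp_all add: prefix_stable nth_append)
  then show ?thesis
    unfolding out_prob_def[of _ _ _ "ys @ [y]"] by (simp add: last)
qed

lemma ising_W_nonneg: "0 \<le> ising_W s x y"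
  by (simp add: ising_W_def)

lemma ising_W_le_1: "ising_W s x y \<le> 1"
  by (simp add: ising_W_def)

lemma out_prob_nonneg: "0 \<le> out_prob e s0 m ys"
  unfolding out_prob_def by (intro prod_nonneg) (simp add: ising_W_nonneg)

lemma out_prob_append_le: "out_prob e s0 m (xs @ ys) \<le> out_prob e s0 m xs"
proof (induction ys rule: rev_induct)
  case (snoc y ys)
  have "out_prob e s0 m (xs @ ys @ [y]) \<le> out_prob e s0 m (xs @ ys)"
    using out_prob_snoc[of e s0 m "xs @ ys" y] out_prob_nonneg[of e s0 m "xs @ ys"] ising_W_le_1
    by (simp add: mult_left_le)
  with snoc show ?case by simp
qed simp

lemma sum_alph: "(\<Sum>y\<in>alph. f y) = f 0 + f 1 + f 2"
  by (simp add: alph_def add.assoc)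

lemma sum_ising_W_mult:
  fixes h :: "nat \<Rightarrow> real"
  assumes "s \<in> alph" "x \<in> alph"
  shows "(\<Sum>y\<in>alph. ising_W s x y * h y) = h x / 2 + h s / 2"
  using assms by (auto simp: sum_alph ising_W_def alph_def)

lemma sum_ising_W:
  assumes "s \<in> alph" "x \<in> alph"
  shows "(\<Sum>y\<in>alph. ising_W s x y) = 1"
  using sum_ising_W_mult[OF assms, of "\<lambda>_. 1"] by simp

lemma next_state_in_alph:
  "valid_encoder e \<Longrightarrow> s0 \<in> alph \<Longrightarrow> next_state e s0 m ys \<in> alph"
  by (auto simp: next_state_def valid_encoder_def)

lemma out_seqs_0: "out_seqs 0 = {[]}"
  by (auto simp: out_seqs_def)

lemma finite_out_seqs: "finite (out_seqs n)"
proof -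
  have "out_seqs n = {ys. set ys \<subseteq> alph \<and> length ys = n}"
    by (auto simp: out_seqs_def)
  then show ?thesis
    by (simp add: finite_lists_length_eq alph_def)
qed

lemma sum_out_seqs_Suc:
  "(\<Sum>zs\<in>out_seqs (Suc n). f zs) = (\<Sum>ys\<in>out_seqs n. \<Sum>y\<in>alph. f (ys @ [y]))"
proof -
  have "out_seqs (Suc n) = (\<lambda>(ys, y). ys @ [y]) ` (out_seqs n \<times> alph)"
  proof (intro set_eqI iffI)
    fix zs assume "zs \<in> out_seqs (Suc n)"
    then show "zs \<in> (\<lambda>(ys, y). ys @ [y]) ` (out_seqs n \<times> alph)"
      by (cases zs rule: rev_cases) (auto simp: out_seqs_def image_iff)
  qed (auto simp: out_seqs_def)
  moreover have "inj_on (\<lambda>(ys, y). ys @ [y]) (out_seqs n \<times> alph)"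
    by (auto simp: inj_on_def)
  ultimately show ?thesis
    by (simp add: sum.reindex sum.cartesian_product prod.case_distrib)
qed

lemma sum_out_prob:
  assumes "valid_encoder e" "s0 \<in> alph"
  shows "(\<Sum>ys\<in>out_seqs n. out_prob e s0 m ys) = 1"
proof (induction n)
  case (Suc n)
  have "(\<Sum>ys\<in>out_seqs (Suc n). out_prob e s0 m ys)
      = (\<Sum>ys\<in>out_seqs n. out_prob e s0 m ys * (\<Sum>y\<in>alph. next_W e s0 m ys y))"
    by (simp add: sum_out_seqs_Suc out_prob_snoc sum_distrib_left)
  with Suc show ?case
    using assms by (simp add: sum_ising_W next_state_in_alph valid_encoder_def)
qed (simp add: out_seqs_0)

section \<open>Deviation bounds for bounded increments\<close>

definition incr_sum :: "(nat list \<Rightarrow> nat \<Rightarrow> real) \<Rightarrow> nat list \<Rightarrow> real" where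
  "incr_sum D ys = (\<Sum>t<length ys. D (take t ys) (ys ! t))"

lemma incr_sum_Nil [simp]: "incr_sum D [] = 0"
  by (simp add: incr_sum_def)

lemma incr_sum_snoc: "incr_sum D (ys @ [y]) = incr_sum D ys + D ys y"
  by (simp add: incr_sum_def nth_append)

lemma incr_sum_telescope:
  "incr_sum (\<lambda>pre y. f pre - f (pre @ [y]) + c) ys = f [] - f ys + c * real (length ys)"
  by (induction ys rule: rev_induct) (simp_all add: incr_sum_snoc algebra_simps)

definition cond_mean :: "fb_encoder \<Rightarrow> nat \<Rightarrow> nat \<Rightarrow> (nat list \<Rightarrow> nat \<Rightarrow> real) \<Rightarrow> nat list \<Rightarrow> real"
  where "cond_mean e s0 m G ys = (\<Sum>y\<in>alph. next_W e s0 m ys y * G ys y)"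

lemma abs_cond_mean_le:
  assumes e: "valid_encoder e" and s0: "s0 \<in> alph" and bounded: "\<And>y. \<bar>G ys y\<bar> \<le> B"
  shows "\<bar>cond_mean e s0 m G ys\<bar> \<le> B"
proof -
  have sx: "next_state e s0 m ys \<in> alph" "e m ys \<in> alph"
    using e s0 by (auto simp: next_state_in_alph valid_encoder_def)
  have "\<bar>cond_mean e s0 m G ys\<bar> \<le> (\<Sum>y\<in>alph. next_W e s0 m ys y * B)"
    unfolding cond_mean_def
    by (rule order_trans[OF sum_abs sum_mono]) (simp add: abs_mult ising_W_nonneg bounded mult_left_mono)
  then show ?thesis
    using sum_ising_W[OF sx] by (simp flip: sum_distrib_right)
qed

lemma cond_mean_centered:
  assumes "valid_encoder e" "s0 \<in> alph"
  shows "cond_mean e s0 m (\<lambda>ys y. G ys y - cond_mean e s0 m G ys) ys = 0"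
proof -
  have "next_state e s0 m ys \<in> alph" "e m ys \<in> alph"
    using assms by (auto simp: next_state_in_alph valid_encoder_def)
  from sum_ising_W[OF this] show ?thesis
    unfolding cond_mean_def by (simp add: right_diff_distrib sum_subtractf flip: sum_distrib_right)
qed

lemma incr_sum_le_centered:
  assumes drift: "\<And>ys. 0 < out_prob e s0 m ys \<Longrightarrow> cond_mean e s0 m G ys \<le> 0"
    and pos: "0 < out_prob e s0 m ys"
  shows "incr_sum G ys \<le> incr_sum (\<lambda>ys y. G ys y - cond_mean e s0 m G ys) ys"
proof -
  have "cond_mean e s0 m G (take t ys) \<le> 0" for t
    using drift pos out_prob_append_le[of e s0 m "take t ys" "drop t ys"] by simp
  then show ?thesis
    by (simp add: incr_sum_def sum_subtractf sum_nonpos)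
qed

lemma martingale_second_moment_le:
  assumes e: "valid_encoder e" and s0: "s0 \<in> alph"
    and bounded: "\<And>ys y. \<bar>D ys y\<bar> \<le> B" and mean_zero: "\<And>ys. cond_mean e s0 m D ys = 0"
  shows "(\<Sum>ys\<in>out_seqs n. out_prob e s0 m ys * (incr_sum D ys)\<^sup>2) \<le> real n * B\<^sup>2"
proof (induction n)
  case (Suc n)
  let ?P = "out_prob e s0 m"
  have step: "(\<Sum>y\<in>alph. next_W e s0 m ys y * (incr_sum D ys + D ys y)\<^sup>2) \<le> (incr_sum D ys)\<^sup>2 + B\<^sup>2"
    for ys
  proof -
    let ?W = "next_W e s0 m ys"
    have sx: "next_state e s0 m ys \<in> alph" "e m ys \<in> alph"
      using e s0 by (auto simp: next_state_in_alph valid_encoder_def)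
    have "(\<Sum>y\<in>alph. ?W y * (incr_sum D ys + D ys y)\<^sup>2)
        = (incr_sum D ys)\<^sup>2 * (\<Sum>y\<in>alph. ?W y) + 2 * incr_sum D ys * cond_mean e s0 m D ys
          + (\<Sum>y\<in>alph. ?W y * (D ys y)\<^sup>2)"
      by (simp add: cond_mean_def power2_eq_square algebra_simps sum.distrib sum_distrib_left)
    also have "\<dots> = (incr_sum D ys)\<^sup>2 + (\<Sum>y\<in>alph. ?W y * (D ys y)\<^sup>2)"
      using mean_zero sum_ising_W[OF sx] by simp
    also have "(\<Sum>y\<in>alph. ?W y * (D ys y)\<^sup>2) \<le> (\<Sum>y\<in>alph. ?W y * B\<^sup>2)"
      by (intro sum_mono mult_left_mono ising_W_nonneg)
        (metis abs_ge_zero bounded power2_abs power_mono)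
    also have "\<dots> = B\<^sup>2"
      using sum_ising_W[OF sx] by (simp flip: sum_distrib_right)
    finally show ?thesis by simp
  qed
  have "(\<Sum>ys\<in>out_seqs (Suc n). ?P ys * (incr_sum D ys)\<^sup>2)
      = (\<Sum>ys\<in>out_seqs n. ?P ys * (\<Sum>y\<in>alph. next_W e s0 m ys y * (incr_sum D ys + D ys y)\<^sup>2))"
    by (simp add: sum_out_seqs_Suc out_prob_snoc incr_sum_snoc sum_distrib_left mult.assoc)
  also have "\<dots> \<le> (\<Sum>ys\<in>out_seqs n. ?P ys * (incr_sum D ys)\<^sup>2 + ?P ys * B\<^sup>2)"
    by (intro sum_mono) (simp add: mult_left_mono out_prob_nonneg step flip: distrib_left)
  also have "\<dots> = (\<Sum>ys\<in>out_seqs n. ?P ys * (incr_sum D ys)\<^sup>2) + B\<^sup>2"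
    using sum_out_prob[OF e s0] by (simp add: sum.distrib flip: sum_distrib_right)
  finally show ?case
    using Suc by (simp add: algebra_simps)
qed (simp add: out_seqs_0)

text \<open>Chebyshev's inequality for the martingale part of \<open>G\<close>, which dominates \<open>G\<close> on paths of
  positive probability because the drift of \<open>G\<close> is nonpositive.\<close>

lemma supermartingale_deviation_le:
  assumes e: "valid_encoder e" and s0: "s0 \<in> alph"
    and bounded: "\<And>ys y. \<bar>G ys y\<bar> \<le> B"
    and drift: "\<And>ys. 0 < out_prob e s0 m ys \<Longrightarrow> cond_mean e s0 m G ys \<le> 0"
    and a: "0 < a"
    and event: "\<And>ys. ys \<in> out_seqs n \<Longrightarrow> 0 < out_prob e s0 m ys \<Longrightarrow> E ys \<Longrightarrow> a \<le> incr_sum G ys"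
  shows "sum (out_prob e s0 m) {ys \<in> out_seqs n. E ys} \<le> 4 * real n * B\<^sup>2 / a\<^sup>2"
proof -
  let ?P = "out_prob e s0 m"
  define D where "D = (\<lambda>ys y. G ys y - cond_mean e s0 m G ys)"
  have mean_bounded: "\<bar>cond_mean e s0 m G ys\<bar> \<le> B" for ys
    by (rule abs_cond_mean_le[OF e s0]) (rule bounded)
  have D_bounded: "\<bar>D ys y\<bar> \<le> 2 * B" for ys y
    using bounded[of ys y] mean_bounded[of ys] by (simp add: D_def abs_le_iff)
  have weighted: "a\<^sup>2 * ?P ys \<le> ?P ys * (incr_sum D ys)\<^sup>2" if ys: "ys \<in> out_seqs n" "E ys" for ys
  proof (cases "0 < ?P ys")
    case True
    then have "a \<le> incr_sum D ys"
      using event[OF ys(1) True ys(2)] incr_sum_le_centered[OF drift True] by (simp add: D_def)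
    then have "a\<^sup>2 \<le> (incr_sum D ys)\<^sup>2"
      using a by (simp add: power_mono)
    then show ?thesis
      using True by (simp add: mult.commute mult_left_mono)
  next
    case False
    then have "?P ys = 0"
      using out_prob_nonneg[of e s0 m ys] by simp
    then show ?thesis by simp
  qed
  have "a\<^sup>2 * sum ?P {ys \<in> out_seqs n. E ys} \<le> (\<Sum>ys\<in>{ys \<in> out_seqs n. E ys}. ?P ys * (incr_sum D ys)\<^sup>2)"
    unfolding sum_distrib_left by (intro sum_mono weighted) auto
  also have "\<dots> \<le> (\<Sum>ys\<in>out_seqs n. ?P ys * (incr_sum D ys)\<^sup>2)"
    by (intro sum_mono2) (simp_all add: finite_out_seqs out_prob_nonneg)
  also have "\<dots> \<le> real n * (2 * B)\<^sup>2"
    using D_bounded cond_mean_centered[OF e s0] unfolding D_def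
    by (intro martingale_second_moment_le[OF e s0]) simp_all
  finally show ?thesis
    using a by (simp add: pos_le_divide_eq power_mult_distrib algebra_simps)
qed

section \<open>The maximum of the rate expression\<close>

lemma root_poly_mono:
  fixes a b :: real
  assumes "0 \<le> a" "a \<le> b"
  shows "a^4 + 2*a^3 \<le> b^4 + 2*b^3"
  using assms by (intro add_mono power_mono mult_left_mono) auto

definition rho :: real where
  "rho = (SOME r. 0 < r \<and> r < 1 \<and> r^4 + 2*r^3 = 1)"

lemma rho: "0 < rho" "rho < 1" "rho^4 + 2*rho^3 = 1"
proof -
  have "\<exists>r\<ge>0. r \<le> 1 \<and> r^4 + 2*r^3 = (1::real)"
    by (rule IVT) (auto intro!: continuous_intros)
  then obtain r :: real where r: "0 \<le> r" "r \<le> 1" "r^4 + 2*r^3 = 1"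
    by blast
  then have "r \<noteq> 0" "r \<noteq> 1"
    by auto
  with r have "\<exists>r. 0 < r \<and> r < 1 \<and> r^4 + 2*r^3 = (1::real)"
    by (intro exI[of _ r]) simp
  from someI_ex[OF this] show "0 < rho" "rho < 1" "rho^4 + 2*rho^3 = 1"
    unfolding rho_def[symmetric] by auto
qed

lemma rho_bounds: "71667274/100000000 < rho" "rho < 71667275/100000000"
proof -
  show "71667274/100000000 < rho"
  proof (rule ccontr)
    assume "\<not> ?thesis"
    then have "rho^4 + 2*rho^3 \<le> (71667274/100000000)^4 + 2*(71667274/100000000::real)^3"
      using rho by (intro root_poly_mono) auto
    then show False
      using rho by (simp add: power_divide)
  qed
  show "rho < 71667275/100000000"
  proof (rule ccontr)
    assume "\<not> ?thesis"
    then have "(71667275/100000000)^4 + 2*(71667275/100000000::real)^3 \<le> rho^4 + 2*rho^3"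
      using rho by (intro root_poly_mono) auto
    then show False
      using rho by (simp add: power_divide)
  qed
qed

definition cap :: real where
  "cap = - 2 * log 2 rho"

lemma cap_pos: "0 < cap"
  using rho by (simp add: cap_def)

lemma neg_mult_log_le:
  fixes p a :: real
  assumes "0 \<le> p" "0 < a"
  shows "- p * log 2 p \<le> - p * log 2 a + (a - p) / ln 2"
proof (cases "p = 0")
  case False
  then have p: "0 < p"
    using assms by simp
  have "p * ln (a / p) \<le> p * (a / p - 1)"
    using p assms by (intro mult_left_mono ln_le_minus_one) auto
  moreover have "ln (a / p) = ln a - ln p" "p * (a / p - 1) = a - p"
    using p assms by (simp_all add: ln_div field_simps)
  ultimately have "p * (ln a - ln p) / ln 2 \<le> (a - p) / ln 2"
    by (simp add: divide_right_mono)
  moreover have "- p * log 2 p - (- p * log 2 a) = p * (ln a - ln p) / ln 2"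
    by (simp add: log_def field_simps)
  ultimately show ?thesis
    by linarith
qed (use assms in simp)

lemma log_rho_powers:
  "log 2 (rho^4) = 4 * log 2 rho" "log 2 (2 * rho^3) = 1 + 3 * log 2 rho"
  using rho by (simp_all add: log_mult log_nat_power)

lemma ising3_rate_le_cap:
  assumes "0 \<le> p" "p \<le> 1"
  shows "ising3_rate p \<le> cap"
proof -
  have "- p * log 2 p \<le> - p * log 2 (rho^4) + (rho^4 - p) / ln 2"
    using neg_mult_log_le[of p "rho^4"] assms rho by simp
  moreover have "- (1 - p) * log 2 (1 - p) \<le> - (1 - p) * log 2 (2 * rho^3) + (2 * rho^3 - (1 - p)) / ln 2"
    using neg_mult_log_le[of "1 - p" "2 * rho^3"] assms rho by simp
  moreover have "(rho^4 - p) / ln 2 + (2 * rho^3 - (1 - p)) / ln 2 = 0"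
    using rho by (simp add: add_divide_distrib[symmetric])
  ultimately have "H2 p + 1 - p \<le> - log 2 rho * (p + 3)"
    unfolding H2_def log_rho_powers by (simp add: algebra_simps)
  then show ?thesis
    using assms by (simp add: ising3_rate_def cap_def divide_le_eq algebra_simps)
qed

lemma ising3_rate_rho4: "ising3_rate (rho^4) = cap"
proof -
  have "1 - rho^4 = 2 * rho^3"
    using rho by simp
  then have "H2 (rho^4) + 1 - rho^4 = - log 2 rho * (4 * rho^4 + 6 * rho^3)"
    unfolding H2_def \<open>1 - rho^4 = 2 * rho^3\<close> log_rho_powers
    using rho(3) by (simp add: algebra_simps)
  also have "\<dots> = - log 2 rho * (rho^4 + 3)"
    by (rule arg_cong[where f = "\<lambda>t. - log 2 rho * t"]) (use rho(3) in linarith)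
  finally have "H2 (rho^4) + 1 - rho^4 = - log 2 rho * (rho^4 + 3)" .
  moreover have "rho^4 + 3 \<noteq> 0"
    using rho by (metis add_pos_pos zero_less_numeral zero_less_power less_irrefl)
  ultimately show ?thesis
    unfolding ising3_rate_def cap_def by simp
qed

lemma rho4_mem_unit: "rho^4 \<in> {0..1}"
  using rho by (simp add: power_le_one)

lemma SUP_ising3_rate: "(SUP p \<in> {0..1}. ising3_rate p) = cap"
proof (rule cSup_eq_maximum)
  show "cap \<in> ising3_rate ` {0..1}"
    using rho4_mem_unit ising3_rate_rho4 by (metis image_eqI)
  show "x \<le> cap" if "x \<in> ising3_rate ` {0..1}" for x
    using that ising3_rate_le_cap by auto
qed

lemma rho4_approx: "\<bar>rho^4 - 0.263805\<bar> \<le> 0.0000005"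
proof -
  have "(71667274/100000000::real)^4 \<le> rho^4" "rho^4 \<le> (71667275/100000000::real)^4"
    using rho_bounds rho by (auto intro!: power_mono)
  then show ?thesis
    by (simp add: abs_le_iff power_divide)
qed

lemma ln_2_bounds: "0.693147180 \<le> ln (2::real)" "ln (2::real) \<le> 0.693147181"
  using ln_approx_bounds[of 2 12] by (simp_all add: numeral_eq_Suc lessThan_Suc)

lemma ln_inv_rho_bounds: "0.333135958 \<le> ln (1 / rho)" "ln (1 / rho) \<le> 0.333135973"
proof -
  have "ln (100000000/71667275::real) \<le> ln (1 / rho)" "ln (1 / rho) \<le> ln (100000000/71667274::real)"
    using rho_bounds rho by (simp_all add: field_simps)
  moreover have "0.333135958 \<le> ln (100000000/71667275::real)"
    using ln_approx_bounds[of "100000000/71667275::real" 6] by (simp add: numeral_eq_Suc lessThan_Suc)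
  moreover have "ln (100000000/71667274::real) \<le> 0.333135973"
    using ln_approx_bounds[of "100000000/71667274::real" 6] by (simp add: numeral_eq_Suc lessThan_Suc)
  ultimately show "0.333135958 \<le> ln (1 / rho)" "ln (1 / rho) \<le> 0.333135973"
    by linarith+
qed

lemma cap_approx: "\<bar>cap - 0.961227\<bar> \<le> 0.0000005"
proof -
  have cap_ln: "cap = 2 * ln (1 / rho) / ln 2"
    using rho by (simp add: cap_def log_def ln_div)
  have "2 * 0.333135958 / 0.693147181 \<le> 2 * ln (1 / rho) / ln 2"
    using ln_2_bounds ln_inv_rho_bounds by (intro frac_le) auto
  moreover have "2 * ln (1 / rho) / ln 2 \<le> 2 * 0.333135973 / 0.693147180"
    using ln_2_bounds ln_inv_rho_bounds by (intro frac_le) auto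
  ultimately show ?thesis
    unfolding cap_ln by (simp add: abs_le_iff)
qed

section \<open>Converse\<close>

text \<open>The auxiliary output law is a Markov chain on nodes \<open>(flag, last output)\<close>; the flag is
  raised by an output that repeats its predecessor and lowered by the next output.\<close>

definition aux_step :: "bool \<times> nat \<Rightarrow> nat \<Rightarrow> bool \<times> nat" where
  "aux_step q y = (\<not> fst q \<and> y = snd q, y)"

definition aux_node :: "nat \<Rightarrow> nat list \<Rightarrow> bool \<times> nat" where
  "aux_node s0 ys = foldl aux_step (False, s0) ys"

definition aux_kernel :: "bool \<times> nat \<Rightarrow> nat \<Rightarrow> real" where
  "aux_kernel q y =
     (if \<not> fst q then (if y = snd q then (1 + rho^4) / 2 else rho^3 / 2)
      else (if y = snd q then 2 * rho^4 / (1 + rho^4) else rho^3 / (1 + rho^4)))"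

definition aux_prob :: "nat \<Rightarrow> nat list \<Rightarrow> real" where
  "aux_prob s0 ys = (\<Prod>t<length ys. aux_kernel (aux_node s0 (take t ys)) (ys ! t))"

text \<open>The potential compensates for the channel state, which the auxiliary law does not see:
  with it, \<open>density_incr\<close> has nonpositive mean for every state and input
  (\<open>expected_density_incr_nonpos\<close>).\<close>

definition aux_potential :: "bool \<times> nat \<Rightarrow> nat \<Rightarrow> real" where
  "aux_potential q s =
     (if s = snd q then (if fst q then log 2 (1 + rho^4) - 1 - 2 * log 2 rho else 0)
      else (if fst q then log 2 (1 + rho^4) - log 2 rho else 1 - log 2 rho))"

text \<open>Impossible outputs contribute \<open>log 2 0 = 0\<close> here; they carry weight 0.\<close>

definition density_incr :: "bool \<times> nat \<Rightarrow> nat \<Rightarrow> nat \<Rightarrow> nat \<Rightarrow> real" where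
  "density_incr q s x y =
     log 2 (ising_W s x y) - log 2 (aux_kernel q y) + aux_potential (aux_step q y) x - aux_potential q s - cap"

lemma aux_node_Nil [simp]: "aux_node s0 [] = (False, s0)"
  by (simp add: aux_node_def)

lemma aux_node_snoc: "aux_node s0 (ys @ [y]) = aux_step (aux_node s0 ys) y"
  by (simp add: aux_node_def)

lemma aux_node_in_alph: "s0 \<in> alph \<Longrightarrow> set ys \<subseteq> alph \<Longrightarrow> snd (aux_node s0 ys) \<in> alph"
  by (induction ys rule: rev_induct) (auto simp: aux_node_snoc aux_step_def)

lemma aux_prob_Nil [simp]: "aux_prob s0 [] = 1"
  by (simp add: aux_prob_def)

lemma aux_prob_snoc: "aux_prob s0 (ys @ [y]) = aux_prob s0 ys * aux_kernel (aux_node s0 ys) y"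
proof -
  have "(\<Prod>t<length ys. aux_kernel (aux_node s0 (take t (ys @ [y]))) ((ys @ [y]) ! t)) = aux_prob s0 ys"
    unfolding aux_prob_def by (rule prod.cong) (simp_all add: nth_append)
  then show ?thesis
    by (simp add: aux_prob_def[of _ "ys @ [y]"])
qed

lemma one_plus_rho4_pos: "0 < 1 + rho^4"
  using rho by (metis add_pos_pos zero_less_one zero_less_power)

lemma aux_kernel_pos: "0 < aux_kernel q y"
  using rho one_plus_rho4_pos by (simp add: aux_kernel_def)

lemma aux_prob_pos: "0 < aux_prob s0 ys"
  unfolding aux_prob_def by (intro prod_pos) (simp add: aux_kernel_pos)

lemma sum_alph_if: "l \<in> alph \<Longrightarrow> (\<Sum>y\<in>alph. if y = l then a else b) = a + 2 * (b :: real)"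
  by (auto simp: sum_alph alph_def)

lemma sum_aux_kernel:
  assumes "snd q \<in> alph"
  shows "(\<Sum>y\<in>alph. aux_kernel q y) = 1"
proof (cases "fst q")
  case True
  have "2 * rho^4 / (1 + rho^4) + 2 * (rho^3 / (1 + rho^4)) = (1 + rho^4) / (1 + rho^4)"
    using rho(3) by (simp add: add_divide_distrib[symmetric])
  with True assms show ?thesis
    using one_plus_rho4_pos by (simp add: aux_kernel_def sum_alph_if)
next
  case False
  with assms have "(\<Sum>y\<in>alph. aux_kernel q y) = (1 + (rho^4 + 2 * rho^3)) / 2"
    by (simp add: aux_kernel_def sum_alph_if field_simps)
  with rho(3) show ?thesis
    by simp
qed

lemma sum_aux_prob:
  assumes "s0 \<in> alph"
  shows "(\<Sum>ys\<in>out_seqs n. aux_prob s0 ys) = 1"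
proof (induction n)
  case (Suc n)
  have "(\<Sum>ys\<in>out_seqs (Suc n). aux_prob s0 ys)
      = (\<Sum>ys\<in>out_seqs n. aux_prob s0 ys * (\<Sum>y\<in>alph. aux_kernel (aux_node s0 ys) y))"
    by (simp add: sum_out_seqs_Suc aux_prob_snoc sum_distrib_left)
  also have "\<dots> = (\<Sum>ys\<in>out_seqs n. aux_prob s0 ys)"
    using assms by (intro sum.cong) (auto simp: sum_aux_kernel aux_node_in_alph out_seqs_def)
  finally show ?case
    using Suc by simp
qed (simp add: out_seqs_0)

lemma log_aux_kernel_values:
  "log 2 ((1 + rho^4) / 2) = log 2 (1 + rho^4) - 1"
  "log 2 (rho^3 / 2) = 3 * log 2 rho - 1"
  "log 2 (2 * rho^4 / (1 + rho^4)) = 1 + 4 * log 2 rho - log 2 (1 + rho^4)"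
  "log 2 (rho^3 / (1 + rho^4)) = 3 * log 2 rho - log 2 (1 + rho^4)"
  using rho one_plus_rho4_pos by (simp_all add: log_divide log_mult log_nat_power)

lemma log_ising_W_values:
  "log 2 (0 :: real) = 0" "log 2 (1 / 2 :: real) = -1" "log 2 (1 / 2 + 1 / 2 :: real) = 0"
  by (simp add: log_def) (simp_all add: log_divide)

lemma expected_density_incr_nonpos:
  assumes "s \<in> alph" "x \<in> alph"
  shows "(\<Sum>y\<in>alph. ising_W s x y * density_incr q s x y) \<le> 0"
proof -
  have "log 2 (1 / 2) < log 2 rho"
    using rho rho_bounds by (subst log_less_cancel_iff) auto
  then have "-1 < log 2 rho"
    by (simp add: log_divide)
  then show ?thesis
    unfolding sum_ising_W_mult[OF assms]
    by (cases "fst q"; cases "s = snd q"; cases "x = snd q"; cases "x = s")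
      (auto simp: density_incr_def ising_W_def aux_kernel_def aux_potential_def aux_step_def
        log_aux_kernel_values log_ising_W_values cap_def)
qed

lemma bounded_aux_potential: "\<exists>B. \<forall>q s. \<bar>aux_potential q s\<bar> \<le> B"
  by (rule exI[of _ "\<bar>log 2 (1 + rho^4) - 1 - 2 * log 2 rho\<bar> + \<bar>log 2 (1 + rho^4) - log 2 rho\<bar>
      + \<bar>1 - log 2 rho\<bar>"]) (auto simp: aux_potential_def)

lemma bounded_density_incr: "\<exists>B. \<forall>q s x y. \<bar>density_incr q s x y\<bar> \<le> B"
proof -
  obtain B\<^sub>\<phi> where B\<^sub>\<phi>: "\<And>q s. \<bar>aux_potential q s\<bar> \<le> B\<^sub>\<phi>"
    using bounded_aux_potential by blast
  define B\<^sub>Q where "B\<^sub>Q = \<bar>log 2 ((1 + rho^4) / 2)\<bar> + \<bar>log 2 (rho^3 / 2)\<bar>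
      + \<bar>log 2 (2 * rho^4 / (1 + rho^4))\<bar> + \<bar>log 2 (rho^3 / (1 + rho^4))\<bar>"
  have B\<^sub>Q: "\<bar>log 2 (aux_kernel q y)\<bar> \<le> B\<^sub>Q" for q y
    by (auto simp: aux_kernel_def B\<^sub>Q_def)
  have B\<^sub>W: "\<bar>log 2 (ising_W s x y)\<bar> \<le> 1" for s x y
    by (auto simp: ising_W_def log_ising_W_values)
  have "\<bar>density_incr q s x y\<bar> \<le> 1 + B\<^sub>Q + 2 * B\<^sub>\<phi> + \<bar>cap\<bar>" for q s x y
    using B\<^sub>W[of s x y] B\<^sub>Q[of q y] B\<^sub>\<phi>[of "aux_step q y" x] B\<^sub>\<phi>[of q s]
    unfolding density_incr_def by linarith
  then show ?thesis
    by blast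
qed

lemma log_likelihood_ratio_eq:
  assumes "0 < out_prob e s0 m ys"
  shows "log 2 (out_prob e s0 m ys) - log 2 (aux_prob s0 ys)
    = incr_sum (\<lambda>pre. density_incr (aux_node s0 pre) (next_state e s0 m pre) (e m pre)) ys
      + real (length ys) * cap - aux_potential (aux_node s0 ys) (next_state e s0 m ys)"
  using assms
proof (induction ys rule: rev_induct)
  case Nil
  then show ?case
    by (simp add: next_state_def aux_potential_def)
next
  case (snoc y ys)
  have pos: "0 < out_prob e s0 m ys" "0 < next_W e s0 m ys y"
    using snoc.prems out_prob_nonneg[of e s0 m ys] ising_W_nonneg
    by (auto simp: out_prob_snoc zero_less_mult_iff)
  have "log 2 (out_prob e s0 m (ys @ [y])) = log 2 (out_prob e s0 m ys) + log 2 (next_W e s0 m ys y)"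
    using pos by (simp add: out_prob_snoc log_mult_pos)
  moreover have "log 2 (aux_prob s0 (ys @ [y]))
      = log 2 (aux_prob s0 ys) + log 2 (aux_kernel (aux_node s0 ys) y)"
    by (simp add: aux_prob_snoc log_mult_pos aux_prob_pos aux_kernel_pos)
  moreover have "next_state e s0 m (ys @ [y]) = e m ys"
    by (simp add: next_state_def)
  ultimately show ?case
    using snoc.IH[OF pos(1)]
    by (simp add: incr_sum_snoc density_incr_def aux_node_snoc algebra_simps)
qed

lemma likelihood_ratio_gt_imp_incr_sum_gt:
  assumes pos: "0 < out_prob e s0 m ys"
    and large: "2 powr (real (length ys) * (cap + \<delta>)) * aux_prob s0 ys < out_prob e s0 m ys"
    and B\<^sub>\<phi>: "\<And>q s. \<bar>aux_potential q s\<bar> \<le> B\<^sub>\<phi>"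
  shows "real (length ys) * \<delta> - B\<^sub>\<phi>
    < incr_sum (\<lambda>pre. density_incr (aux_node s0 pre) (next_state e s0 m pre) (e m pre)) ys"
proof -
  have "log 2 (2 powr (real (length ys) * (cap + \<delta>)) * aux_prob s0 ys) < log 2 (out_prob e s0 m ys)"
    using large pos aux_prob_pos by (subst log_less_cancel_iff) auto
  then have "real (length ys) * (cap + \<delta>) + log 2 (aux_prob s0 ys) < log 2 (out_prob e s0 m ys)"
    using aux_prob_pos by (simp add: log_mult_pos)
  then show ?thesis
    using log_likelihood_ratio_eq[OF pos] B\<^sub>\<phi>[of "aux_node s0 ys" "next_state e s0 m ys"]
    by (simp add: abs_le_iff algebra_simps)
qed

lemma likelihood_ratio_tail_le:
  assumes s0: "s0 \<in> alph"
  obtains K where "0 < K"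
    "\<And>e m n \<delta>. valid_encoder e \<Longrightarrow> 0 < \<delta> \<Longrightarrow> K \<le> real n * \<delta> \<Longrightarrow>
      sum (out_prob e s0 m)
        {ys \<in> out_seqs n. 2 powr (real n * (cap + \<delta>)) * aux_prob s0 ys < out_prob e s0 m ys}
      \<le> K / (real n * \<delta>\<^sup>2)"
proof -
  obtain B\<^sub>\<phi> where B\<^sub>\<phi>: "\<And>q s. \<bar>aux_potential q s\<bar> \<le> B\<^sub>\<phi>"
    using bounded_aux_potential by blast
  obtain B where B: "\<And>q s x y. \<bar>density_incr q s x y\<bar> \<le> B"
    using bounded_density_incr by blast
  have "0 \<le> B\<^sub>\<phi>"
    using B\<^sub>\<phi>[of "(False, 0)" 0] by linarith
  define K where "K = 1 + 2 * B\<^sub>\<phi> + 16 * B\<^sup>2"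
  show ?thesis
  proof (rule that)
    show "0 < K"
      using \<open>0 \<le> B\<^sub>\<phi>\<close> by (simp add: K_def add_pos_nonneg)
    fix e m n \<delta>
    assume e: "valid_encoder e" and \<delta>: "0 < \<delta>" and n: "K \<le> real n * \<delta>"
    let ?G = "\<lambda>pre. density_incr (aux_node s0 pre) (next_state e s0 m pre) (e m pre)"
    have n\<delta>: "1 + 2 * B\<^sub>\<phi> \<le> real n * \<delta>"
      using n zero_le_power2[of B] unfolding K_def by linarith
    have "sum (out_prob e s0 m)
        {ys \<in> out_seqs n. 2 powr (real n * (cap + \<delta>)) * aux_prob s0 ys < out_prob e s0 m ys}
      \<le> 4 * real n * B\<^sup>2 / (real n * \<delta> / 2)\<^sup>2"
    proof (rule supermartingale_deviation_le[OF e s0])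
      show "\<bar>?G pre y\<bar> \<le> B" for pre y
        by (rule B)
      show "cond_mean e s0 m ?G pre \<le> 0" for pre
        unfolding cond_mean_def using e s0
        by (intro expected_density_incr_nonpos) (auto simp: next_state_in_alph valid_encoder_def)
      show "0 < real n * \<delta> / 2"
        using n\<delta> \<open>0 \<le> B\<^sub>\<phi>\<close> by linarith
    next
      fix ys
      assume ys: "ys \<in> out_seqs n" and pos: "0 < out_prob e s0 m ys"
        and large: "2 powr (real n * (cap + \<delta>)) * aux_prob s0 ys < out_prob e s0 m ys"
      have "length ys = n"
        using ys by (simp add: out_seqs_def)
      with likelihood_ratio_gt_imp_incr_sum_gt[OF pos _ B\<^sub>\<phi>] large
      have "real n * \<delta> - B\<^sub>\<phi> < incr_sum ?G ys"
        by simp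
      then show "real n * \<delta> / 2 \<le> incr_sum ?G ys"
        using n\<delta> by linarith
    qed
    also have "\<dots> = 16 * B\<^sup>2 / (real n * \<delta>\<^sup>2)"
      using n\<delta> \<open>0 \<le> B\<^sub>\<phi>\<close> \<delta> by (simp add: field_simps power2_eq_square)
    also have "\<dots> \<le> K / (real n * \<delta>\<^sup>2)"
      using \<open>0 \<le> B\<^sub>\<phi>\<close> by (intro divide_right_mono) (auto simp: K_def)
    finally show "sum (out_prob e s0 m)
        {ys \<in> out_seqs n. 2 powr (real n * (cap + \<delta>)) * aux_prob s0 ys < out_prob e s0 m ys}
      \<le> K / (real n * \<delta>\<^sup>2)" .
  qed
qed

lemma sum_correct_decoding_le:
  fixes P :: "nat \<Rightarrow> 'a \<Rightarrow> real" and Q :: "'a \<Rightarrow> real"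
  assumes S: "finite S" and P: "\<And>m y. 0 \<le> P m y" and Q: "\<And>y. 0 \<le> Q y" "sum Q S \<le> 1"
    and c: "0 \<le> c"
  shows "(\<Sum>m<M. sum (P m) {y \<in> S. d y = m}) \<le> c + (\<Sum>m<M. sum (P m) {y \<in> S. c * Q y < P m y})"
proof -
  have per_message: "sum (P m) {y \<in> S. d y = m}
      \<le> c * sum Q {y \<in> S. d y = m} + sum (P m) {y \<in> S. c * Q y < P m y}" for m
  proof -
    have "(\<Sum>y\<in>{y \<in> S. d y = m}. if c * Q y < P m y then P m y else 0)
        \<le> (\<Sum>y\<in>S. if c * Q y < P m y then P m y else 0)"
      using S P by (intro sum_mono2) auto
    also have "\<dots> = sum (P m) {y \<in> S. c * Q y < P m y}"
      using S by (simp add: sum.inter_filter)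
    finally have tail: "(\<Sum>y\<in>{y \<in> S. d y = m}. if c * Q y < P m y then P m y else 0)
        \<le> sum (P m) {y \<in> S. c * Q y < P m y}" .
    have "sum (P m) {y \<in> S. d y = m}
        \<le> (\<Sum>y\<in>{y \<in> S. d y = m}. c * Q y + (if c * Q y < P m y then P m y else 0))"
      using c Q by (intro sum_mono) (auto simp: not_less)
    also have "\<dots> = c * sum Q {y \<in> S. d y = m}
        + (\<Sum>y\<in>{y \<in> S. d y = m}. if c * Q y < P m y then P m y else 0)"
      by (simp add: sum.distrib sum_distrib_left)
    finally show ?thesis
      using tail by linarith
  qed
  have "(\<Sum>m<M. sum Q {y \<in> S. d y = m}) = sum Q (\<Union>m<M. {y \<in> S. d y = m})"
    using S by (intro sum.UNION_disjoint[symmetric]) auto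
  also have "\<dots> \<le> sum Q S"
    using S Q by (intro sum_mono2) auto
  finally have "c * (\<Sum>m<M. sum Q {y \<in> S. d y = m}) \<le> c"
    using c Q by (simp add: mult_left_le)
  moreover have "(\<Sum>m<M. sum (P m) {y \<in> S. d y = m})
      \<le> c * (\<Sum>m<M. sum Q {y \<in> S. d y = m}) + (\<Sum>m<M. sum (P m) {y \<in> S. c * Q y < P m y})"
    unfolding sum_distrib_left sum.distrib[symmetric]
    by (intro sum_mono per_message[unfolded sum_distrib_left])
  ultimately show ?thesis
    by linarith
qed

lemma avg_err_eq:
  "avg_err s0 n M e d = (\<Sum>m<M. sum (out_prob e s0 m) {ys \<in> out_seqs n. d ys \<noteq> m}) / real M"
proof -
  have "(\<Sum>ys\<in>out_seqs n. if d ys = m then 0 else out_prob e s0 m ys)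
      = sum (out_prob e s0 m) {ys \<in> out_seqs n. d ys \<noteq> m}" for m
    by (auto simp: sum.inter_filter finite_out_seqs intro!: sum.cong)
  then show ?thesis
    by (simp add: avg_err_def)
qed

lemma avg_err_ge:
  fixes Q :: "nat list \<Rightarrow> real"
  assumes e: "valid_encoder e" and s0: "s0 \<in> alph" and M: "0 < M"
    and Q: "\<And>ys. 0 \<le> Q ys" "sum Q (out_seqs n) \<le> 1" and c: "0 \<le> c"
    and tail: "\<And>m. sum (out_prob e s0 m) {ys \<in> out_seqs n. c * Q ys < out_prob e s0 m ys} \<le> \<tau>"
  shows "1 - c / real M - \<tau> \<le> avg_err s0 n M e d"
proof -
  have miss: "sum (out_prob e s0 m) {ys \<in> out_seqs n. d ys \<noteq> m}
      = 1 - sum (out_prob e s0 m) {ys \<in> out_seqs n. d ys = m}" for m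
  proof -
    have "{ys \<in> out_seqs n. d ys \<noteq> m} = out_seqs n - {ys \<in> out_seqs n. d ys = m}"
      by auto
    then show ?thesis
      by (simp add: sum_diff finite_out_seqs sum_out_prob[OF e s0])
  qed
  have "(\<Sum>m<M. sum (out_prob e s0 m) {ys \<in> out_seqs n. d ys = m})
      \<le> c + (\<Sum>m<M. sum (out_prob e s0 m) {ys \<in> out_seqs n. c * Q ys < out_prob e s0 m ys})"
    using Q c by (intro sum_correct_decoding_le) (simp_all add: finite_out_seqs out_prob_nonneg)
  also have "\<dots> \<le> c + real M * \<tau>"
    using tail sum_mono[of "{..<M}" _ "\<lambda>_. \<tau>"] by simp
  finally have "(\<Sum>m<M. sum (out_prob e s0 m) {ys \<in> out_seqs n. d ys = m}) / real M
      \<le> (c + real M * \<tau>) / real M"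
    by (simp add: divide_right_mono)
  also have "\<dots> = c / real M + \<tau>"
    using M by (simp add: add_divide_distrib)
  moreover have "avg_err s0 n M e d = 1 - (\<Sum>m<M. sum (out_prob e s0 m) {ys \<in> out_seqs n. d ys = m}) / real M"
    using M by (simp add: avg_err_eq miss sum_subtractf diff_divide_distrib)
  ultimately show ?thesis
    by linarith
qed

lemma eventually_real_gt_sequentially: "\<forall>\<^sub>F n in sequentially. c < real n"
  using filterlim_real_sequentially by (simp add: filterlim_at_top_dense)

lemma achievable_iff_eventually:
  "achievable s0 R \<longleftrightarrow> 0 \<le> R \<and> (\<forall>\<epsilon>>0. \<forall>\<^sub>F n in sequentially. \<exists>M e d. 1 \<le> M \<and>
     2 powr (real n * R) \<le> real M \<and> valid_encoder e \<and> avg_err s0 n M e d \<le> \<epsilon>)"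
  by (simp add: achievable_def eventually_sequentially)

lemma avg_err_lower_bound:
  assumes s0: "s0 \<in> alph"
  obtains K where "0 < K"
    "\<And>e n M d \<delta>. valid_encoder e \<Longrightarrow> 0 < \<delta> \<Longrightarrow> K \<le> real n * \<delta> \<Longrightarrow>
      2 powr (real n * (cap + 2 * \<delta>)) \<le> real M \<Longrightarrow>
      1 - 2 powr - (real n * \<delta>) - K / (real n * \<delta>\<^sup>2) \<le> avg_err s0 n M e d"
proof -
  obtain K where K: "0 < K"
    and tail: "\<And>e m n \<delta>. valid_encoder e \<Longrightarrow> 0 < \<delta> \<Longrightarrow> K \<le> real n * \<delta> \<Longrightarrow>
      sum (out_prob e s0 m)
        {ys \<in> out_seqs n. 2 powr (real n * (cap + \<delta>)) * aux_prob s0 ys < out_prob e s0 m ys}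
      \<le> K / (real n * \<delta>\<^sup>2)"
    using likelihood_ratio_tail_le[OF s0] by blast
  have "1 - 2 powr - (real n * \<delta>) - K / (real n * \<delta>\<^sup>2) \<le> avg_err s0 n M e d"
    if e: "valid_encoder e" and \<delta>: "0 < \<delta>" and n: "K \<le> real n * \<delta>"
      and M: "2 powr (real n * (cap + 2 * \<delta>)) \<le> real M" for e n M d \<delta>
  proof -
    have "0 < real M"
      using M powr_gt_zero[of 2 "real n * (cap + 2 * \<delta>)"] by linarith
    have "1 - 2 powr (real n * (cap + \<delta>)) / real M - K / (real n * \<delta>\<^sup>2) \<le> avg_err s0 n M e d"
      by (rule avg_err_ge[OF e s0, where Q = "aux_prob s0"])
        (use \<open>0 < real M\<close> s0 tail[OF e \<delta> n] in \<open>simp_all add: aux_prob_pos less_imp_le sum_aux_prob\<close>)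
    moreover have "2 powr (real n * (cap + \<delta>)) / real M
        \<le> 2 powr (real n * (cap + \<delta>)) / 2 powr (real n * (cap + 2 * \<delta>))"
      using M \<open>0 < real M\<close> by (intro divide_left_mono) auto
    moreover have "\<dots> = 2 powr - (real n * \<delta>)"
      unfolding powr_diff[symmetric] by (rule arg_cong[where f = "\<lambda>x. 2 powr x"]) (simp add: algebra_simps)
    ultimately show ?thesis
      by linarith
  qed
  with K show ?thesis
    using that by blast
qed

lemma achievable_le_cap:
  assumes s0: "s0 \<in> alph" and R: "achievable s0 R"
  shows "R \<le> cap"
proof (rule ccontr)
  assume "\<not> R \<le> cap"
  define \<delta> where "\<delta> = (R - cap) / 2"
  have \<delta>: "0 < \<delta>" "R = cap + 2 * \<delta>"
    using \<open>\<not> R \<le> cap\<close> by (simp_all add: \<delta>_def field_simps)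
  obtain K where K: "0 < K"
    and lower: "\<And>e n M d. valid_encoder e \<Longrightarrow> K \<le> real n * \<delta> \<Longrightarrow> 2 powr (real n * R) \<le> real M \<Longrightarrow>
      1 - 2 powr - (real n * \<delta>) - K / (real n * \<delta>\<^sup>2) \<le> avg_err s0 n M e d"
    using avg_err_lower_bound[OF s0] \<delta> by metis
  have "\<forall>\<^sub>F n in sequentially. \<exists>M e d. 1 \<le> M \<and> 2 powr (real n * R) \<le> real M \<and>
      valid_encoder e \<and> avg_err s0 n M e d \<le> 1/4"
    using R unfolding achievable_iff_eventually by (meson zero_less_divide_1_iff zero_less_numeral)
  moreover have "\<forall>\<^sub>F n in sequentially. (K + 1 + 4 * K / \<delta>) / \<delta> < real n"
    by (rule eventually_real_gt_sequentially)
  ultimately obtain n M e d where M: "2 powr (real n * R) \<le> real M"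
    and e: "valid_encoder e" and err: "avg_err s0 n M e d \<le> 1/4"
    and n: "(K + 1 + 4 * K / \<delta>) / \<delta> < real n"
    using eventually_happens'[OF sequentially_bot eventually_conj] by blast
  have "K + 1 + 4 * K / \<delta> < real n * \<delta>" "0 \<le> 4 * K / \<delta>"
    using n \<delta> K by (simp_all add: pos_divide_less_eq)
  then have n_K: "K \<le> real n * \<delta>" and n_1: "1 \<le> real n * \<delta>" and "4 * K / \<delta> < real n * \<delta>"
    using K by linarith+
  then have n_4K: "4 * K < real n * \<delta> * \<delta>"
    using \<delta> by (simp add: pos_divide_less_eq)
  have "2 powr - (real n * \<delta>) \<le> 1/2"
    using powr_mono[of "- (real n * \<delta>)" "-1" 2] n_1 by (simp add: powr_minus)
  moreover have "K / (real n * \<delta>\<^sup>2) < 1/4"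
  proof -
    have "0 < real n * \<delta> * \<delta>"
      using n_1 \<delta> by (simp add: mult_pos_pos)
    with n_4K show ?thesis
      by (simp add: pos_divide_less_eq power2_eq_square mult.assoc)
  qed
  ultimately show False
    using lower[OF e n_K M, of d] err by linarith
qed

section \<open>Achievability\<close>

text \<open>Messages are words over \<open>{0, 1, 2}\<close>, sent as differences mod 3 of successive outputs.
  \<open>sym_cost c\<close> is twice the expected number of channel uses the scheme spends on the symbol
  \<open>c\<close>: a change needs one use, plus a second one with probability 1/2, while the difference 0
  is signalled by two repetitions of the last output.\<close>

definition sym_cost :: "nat \<Rightarrow> nat" where
  "sym_cost c = (if c = 0 then 4 else 3)"

lemma sym_cost_simps [simp]: "sym_cost 0 = 4" "sym_cost (Suc 0) = 3" "sym_cost 2 = 3"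
  by (simp_all add: sym_cost_def)

definition word_cost :: "nat list \<Rightarrow> nat" where
  "word_cost cs = sum_list (map sym_cost cs)"

lemma word_cost_simps [simp]:
  "word_cost [] = 0" "word_cost (c # cs) = sym_cost c + word_cost cs"
  "word_cost (cs @ ds) = word_cost cs + word_cost ds"
  by (simp_all add: word_cost_def)

text \<open>The words of cost at most \<open>L\<close> that cannot be extended within this budget; being
  maximal, they form a prefix-free code.\<close>

fun code_words :: "nat \<Rightarrow> nat list list" where
  "code_words L = (if L < 3 then [[]] else
     (if 4 \<le> L then map ((#) 0) (code_words (L - 4)) else [])
     @ map ((#) 1) (code_words (L - 3)) @ map ((#) 2) (code_words (L - 3)))"

declare code_words.simps [simp del]

lemma code_words_lt_3: "L < 3 \<Longrightarrow> code_words L = [[]]"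
  by (simp add: code_words.simps)

lemma code_words_ge_3:
  "\<not> L < 3 \<Longrightarrow> code_words L = (if 4 \<le> L then map ((#) 0) (code_words (L - 4)) else [])
     @ map ((#) 1) (code_words (L - 3)) @ map ((#) 2) (code_words (L - 3))"
  by (simp add: code_words.simps)

lemma mem_code_words_cases:
  assumes "cs \<in> set (code_words L)"
  shows "(L < 3 \<and> cs = []) \<or>
    (\<exists>c cs'. cs = c # cs' \<and> c < 3 \<and> sym_cost c \<le> L \<and> cs' \<in> set (code_words (L - sym_cost c)))"
  using assms by (cases "L < 3") (auto simp: code_words_lt_3 code_words_ge_3 split: if_splits)

lemma distinct_code_words: "distinct (code_words L)"
proof (induction L rule: code_words.induct)
  case (1 L)
  then show ?case
    by (cases "L < 3") (auto simp: code_words_lt_3 code_words_ge_3 distinct_map)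
qed

lemma code_words_word_cost_le: "cs \<in> set (code_words L) \<Longrightarrow> set cs \<subseteq> {..<3} \<and> word_cost cs \<le> L"
proof (induction cs arbitrary: L)
  case (Cons c cs)
  then show ?case
    using mem_code_words_cases[OF Cons.prems] by fastforce
qed simp

lemma code_words_prefix_free:
  "a \<in> set (code_words L) \<Longrightarrow> b \<in> set (code_words L) \<Longrightarrow> prefix a b \<Longrightarrow> a = b"
proof (induction a arbitrary: L b)
  case Nil
  then show ?case
    using mem_code_words_cases[OF Nil(1)] mem_code_words_cases[OF Nil(2)]
    by (auto simp: sym_cost_def split: if_splits)
next
  case (Cons c a)
  then obtain b' where "b = c # b'" "prefix a b'"
    by (auto simp: prefix_def)
  with Cons show ?case
    using mem_code_words_cases[OF Cons.prems(1)] mem_code_words_cases[OF Cons.prems(2)] by auto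
qed

lemma length_code_words_ge: "rho^4 \<le> real (length (code_words L)) * rho^L"
proof (induction L rule: code_words.induct)
  case (1 L)
  show ?case
  proof (cases "L \<le> 3")
    case True
    then have "rho^4 \<le> rho^L"
      using rho by (intro power_decreasing) auto
    moreover have "rho^L \<le> real (length (code_words L)) * rho^L"
      using True rho by (cases "L = 3") (simp_all add: code_words.simps)
    ultimately show ?thesis
      by linarith
  next
    case False
    have "length (code_words L) = length (code_words (L - 4)) + 2 * length (code_words (L - 3))"
      using False by (simp add: code_words_ge_3)
    moreover have "rho^L = rho^(L - 4) * rho^4" "rho^L = rho^(L - 3) * rho^3"
      using False by (simp_all flip: power_add)
    ultimately have "real (length (code_words L)) * rho^L
        = (real (length (code_words (L - 4))) * rho^(L - 4)) * rho^4
          + 2 * (real (length (code_words (L - 3))) * rho^(L - 3)) * rho^3"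
      by (simp add: algebra_simps)
    also have "\<dots> \<ge> rho^4 * rho^4 + 2 * rho^4 * rho^3"
      using 1 False rho by (intro add_mono mult_right_mono mult_left_mono) auto
    also have "rho^4 * rho^4 + 2 * rho^4 * rho^3 = rho^4 * (rho^4 + 2 * rho^3)"
      by (simp add: algebra_simps)
    finally show ?thesis
      using rho(3) by simp
  qed
qed

lemma mod3_add_diff:
  fixes l c :: nat
  assumes "l < 3" "c < 3"
  shows "((l + c) mod 3 + 3 - l) mod 3 = c"
proof -
  have "l \<in> {0, 1, 2}" "c \<in> {0, 1, 2}"
    using assms by auto
  then show ?thesis
    by auto
qed

lemma mod3_add_eq_iff:
  fixes l c :: nat
  assumes "l < 3" "c < 3"
  shows "(l + c) mod 3 = l \<longleftrightarrow> c = 0"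
proof -
  have "l \<in> {0, 1, 2}" "c \<in> {0, 1, 2}"
    using assms by auto
  then show ?thesis
    by (auto simp: dvd_eq_mod_eq_0)
qed

text \<open>The decoder keeps the last output \<open>l\<close> and the decoded differences \<open>ds\<close>. An output
  repeating \<open>l\<close> only raises the flag \<open>rep\<close>; the next output then decodes either the
  difference 0 (a further repetition) or the pending change.\<close>

definition parse_step :: "bool \<times> nat \<times> nat list \<Rightarrow> nat \<Rightarrow> bool \<times> nat \<times> nat list" where
  "parse_step st y = (case st of (rep, l, ds) \<Rightarrow>
     if \<not> rep \<and> y = l then (True, l, ds) else (False, y, ds @ [(y + 3 - l) mod 3]))"

definition parse :: "nat \<Rightarrow> nat list \<Rightarrow> bool \<times> nat \<times> nat list" where
  "parse s0 ys = foldl parse_step (False, s0, []) ys"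

lemma parse_Nil [simp]: "parse s0 [] = (False, s0, [])"
  by (simp add: parse_def)

lemma parse_snoc: "parse s0 (ys @ [y]) = parse_step (parse s0 ys) y"
  by (simp add: parse_def)

text \<open>Past the end of its word the encoder keeps sending the difference 0.\<close>

definition symbol_at :: "nat list \<Rightarrow> nat \<Rightarrow> nat" where
  "symbol_at cs i = (if i < length cs then cs ! i else 0)"

definition code_enc :: "nat \<Rightarrow> nat \<Rightarrow> fb_encoder" where
  "code_enc s0 L m ys =
     (case parse s0 ys of (rep, l, ds) \<Rightarrow> (l + symbol_at (code_words L ! m) (length ds)) mod 3)"

definition code_dec :: "nat \<Rightarrow> nat \<Rightarrow> decoder" where
  "code_dec s0 L ys =
     (LEAST i. i < length (code_words L) \<and> prefix (code_words L ! i) (snd (snd (parse s0 ys))))"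

text \<open>Twice the expected number of channel uses accounted for by a decoder state; along the
  code it grows by exactly 2 per use in conditional mean (\<open>code_progress_mean\<close>).\<close>

definition progress :: "nat list \<Rightarrow> bool \<times> nat \<times> nat list \<Rightarrow> nat" where
  "progress cs st = (case st of (rep, l, ds) \<Rightarrow>
     word_cost ds + (if rep then (if symbol_at cs (length ds) = 0 then 2 else 1) else 0))"

lemma valid_code_enc: "valid_encoder (code_enc s0 L)"
  by (auto simp: valid_encoder_def code_enc_def alph_def split: prod.splits)

text \<open>When the encoder sends \<open>l + c\<close> (mod 3), the channel state is that same input after a
  repetition and \<open>l\<close> otherwise, and the output is one of the two.\<close>

lemma parse_step_along_code:
  assumes "l < 3" "c < 3" "y = (l + c) mod 3 \<or> y = (if rep then (l + c) mod 3 else l)"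
  shows "parse_step (rep, l, ds) y
    = (if \<not> rep \<and> y = l then (True, l, ds) else (False, (l + c) mod 3, ds @ [c]))"
  using assms by (auto simp: parse_step_def mod3_add_diff)

lemma progress_parse_step_le: "progress cs st + 1 \<le> progress cs (parse_step st y)"
  "progress cs (parse_step st y) \<le> progress cs st + 4"
  by (auto simp: progress_def parse_step_def sym_cost_def split: prod.splits)

lemma progress_parse_step_mean:
  assumes "l < 3" "c < 3" "symbol_at cs (length ds) = c"
  shows "real (progress cs (parse_step (rep, l, ds) ((l + c) mod 3))) / 2
      + real (progress cs (parse_step (rep, l, ds) (if rep then (l + c) mod 3 else l))) / 2
    = real (progress cs (rep, l, ds)) + 2"
proof -
  have "parse_step (rep, l, ds) ((l + c) mod 3)
      = (if \<not> rep \<and> c = 0 then (True, l, ds) else (False, (l + c) mod 3, ds @ [c]))"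
    using parse_step_along_code[of l c "(l + c) mod 3" rep ds] assms by (auto simp: mod3_add_eq_iff)
  moreover have "parse_step (rep, l, ds) (if rep then (l + c) mod 3 else l)
      = (if \<not> rep then (True, l, ds) else (False, (l + c) mod 3, ds @ [c]))"
    using parse_step_along_code[of l c "if rep then (l + c) mod 3 else l" rep ds] assms by auto
  ultimately show ?thesis
    using assms(3) by (cases rep; cases "c = 0") (simp_all add: progress_def sym_cost_def field_simps)
qed

context
  fixes s0 L m
  assumes s0: "s0 \<in> alph" and m: "m < length (code_words L)"
begin

abbreviation cw :: "nat list" where
  "cw \<equiv> code_words L ! m"

lemma symbol_at_cw_lt_3: "symbol_at cw i < 3"
  unfolding symbol_at_def using code_words_word_cost_le[of cw L] m nth_mem by fastforce

lemma code_invariant: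
  assumes "0 < out_prob (code_enc s0 L) s0 m ys" "parse s0 ys = (rep, l, ds)"
  shows "l < 3 \<and> ds = map (symbol_at cw) [0..<length ds] \<and>
    next_state (code_enc s0 L) s0 m ys = (if rep then (l + symbol_at cw (length ds)) mod 3 else l)"
  using assms
proof (induction ys arbitrary: rep l ds rule: rev_induct)
  case Nil
  then show ?case
    using s0 by (auto simp: next_state_def alph_def)
next
  case (snoc y ys)
  obtain rep0 l0 ds0 where p0: "parse s0 ys = (rep0, l0, ds0)"
    by (metis prod_cases3)
  let ?c = "symbol_at cw (length ds0)"
  have pos: "0 < out_prob (code_enc s0 L) s0 m ys" "0 < next_W (code_enc s0 L) s0 m ys y"
    using snoc.prems(1) out_prob_nonneg[of "code_enc s0 L" s0 m ys] ising_W_nonneg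
    by (auto simp: out_prob_snoc zero_less_mult_iff)
  have IH: "l0 < 3" "ds0 = map (symbol_at cw) [0..<length ds0]"
    "next_state (code_enc s0 L) s0 m ys = (if rep0 then (l0 + ?c) mod 3 else l0)"
    using snoc.IH[OF pos(1) p0] by auto
  have x: "code_enc s0 L m ys = (l0 + ?c) mod 3"
    by (simp add: code_enc_def p0)
  have "y = code_enc s0 L m ys \<or> y = next_state (code_enc s0 L) s0 m ys"
    using pos(2) by (auto simp: ising_W_def split: if_splits)
  then have step: "parse s0 (ys @ [y])
      = (if \<not> rep0 \<and> y = l0 then (True, l0, ds0) else (False, (l0 + ?c) mod 3, ds0 @ [?c]))"
    unfolding parse_snoc p0 x IH(3) using IH(1) symbol_at_cw_lt_3 by (intro parse_step_along_code)
  have state: "next_state (code_enc s0 L) s0 m (ys @ [y]) = (l0 + ?c) mod 3"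
    by (simp add: next_state_def x)
  show ?case
  proof (cases "\<not> rep0 \<and> y = l0")
    case True
    with snoc.prems(2) step have "rep" "l = l0" "ds = ds0"
      by auto
    with IH state show ?thesis
      by simp
  next
    case False
    with snoc.prems(2) step have "\<not> rep" "l = (l0 + ?c) mod 3" "ds = ds0 @ [?c]"
      by auto
    moreover have "ds0 @ [?c] = map (symbol_at cw) [0..<length (ds0 @ [?c])]"
      using IH(2) by simp
    ultimately show ?thesis
      using state by simp
  qed
qed

lemma code_progress_mean:
  assumes "0 < out_prob (code_enc s0 L) s0 m pre"
  shows "(\<Sum>y\<in>alph. next_W (code_enc s0 L) s0 m pre y * real (progress cw (parse s0 (pre @ [y]))))
    = real (progress cw (parse s0 pre)) + 2"
proof -
  obtain rep l ds where p: "parse s0 pre = (rep, l, ds)"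
    by (metis prod_cases3)
  let ?c = "symbol_at cw (length ds)"
  have inv: "l < 3" "next_state (code_enc s0 L) s0 m pre = (if rep then (l + ?c) mod 3 else l)"
    using code_invariant[OF assms p] by auto
  have x: "code_enc s0 L m pre = (l + ?c) mod 3"
    by (simp add: code_enc_def p)
  have "next_state (code_enc s0 L) s0 m pre \<in> alph" "code_enc s0 L m pre \<in> alph"
    using s0 valid_code_enc by (auto simp: next_state_in_alph valid_encoder_def)
  from sum_ising_W_mult[OF this] show ?thesis
    unfolding parse_snoc p x inv(2)
    using progress_parse_step_mean[OF inv(1) symbol_at_cw_lt_3 refl] by simp
qed

lemma code_dec_eq:
  assumes pos: "0 < out_prob (code_enc s0 L) s0 m ys"
    and long: "length cw \<le> length (snd (snd (parse s0 ys)))"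
  shows "code_dec s0 L ys = m"
proof -
  obtain rep l ds where p: "parse s0 ys = (rep, l, ds)"
    by (metis prod_cases3)
  have "ds = map (symbol_at cw) [0..<length ds]"
    using code_invariant[OF pos p] by auto
  then have ds_nth: "ds ! i = symbol_at cw i" if "i < length ds" for i
    using that by (metis add_0 diff_zero length_upt nth_map nth_upt)
  have "take (length cw) ds = cw"
    using long p by (intro nth_equalityI) (auto simp: ds_nth symbol_at_def)
  then have cw_prefix: "prefix cw ds"
    by (metis take_is_prefix)
  have unique: "i = m" if "i < length (code_words L)" "prefix (code_words L ! i) ds" for i
  proof -
    have mem: "code_words L ! i \<in> set (code_words L)" "cw \<in> set (code_words L)"
      using that(1) m by simp_all
    have "code_words L ! i = cw"
      using prefix_same_cases[OF that(2) cw_prefix]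
        code_words_prefix_free[OF mem] code_words_prefix_free[OF mem(2,1)] by auto
    then show ?thesis
      using distinct_code_words that(1) m by (simp add: nth_eq_iff_index_eq)
  qed
  show ?thesis
    unfolding code_dec_def p
  proof (rule Least_equality)
    show "m < length (code_words L) \<and> prefix cw (snd (snd (rep, l, ds)))"
      using m cw_prefix by simp
    show "m \<le> i" if "i < length (code_words L) \<and> prefix (code_words L ! i) (snd (snd (rep, l, ds)))" for i
      using unique[of i] that by simp
  qed
qed

lemma progress_lt_word_cost:
  assumes pos: "0 < out_prob (code_enc s0 L) s0 m ys"
    and short: "length (snd (snd (parse s0 ys))) < length cw"
  shows "progress cw (parse s0 ys) < word_cost cw"
proof -
  obtain rep l ds where p: "parse s0 ys = (rep, l, ds)"
    by (metis prod_cases3)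
  let ?k = "length ds"
  have "ds = map (symbol_at cw) [0..<?k]"
    using code_invariant[OF pos p] by auto
  also have "\<dots> = take ?k cw"
    using short p by (intro nth_equalityI) (auto simp: symbol_at_def)
  finally have ds: "ds = take ?k cw" .
  have "cw = take ?k cw @ [cw ! ?k] @ drop (Suc ?k) cw"
    using short p by (simp add: id_take_nth_drop)
  from arg_cong[OF this, of word_cost] have "word_cost ds + sym_cost (cw ! ?k) \<le> word_cost cw"
    using ds by simp
  moreover have "progress cw (rep, l, ds) < word_cost ds + sym_cost (cw ! ?k)"
    using short p by (auto simp: progress_def sym_cost_def symbol_at_def)
  ultimately show ?thesis
    using p by simp
qed

lemma code_error_le:
  assumes "real L < 2 * real n"
  shows "sum (out_prob (code_enc s0 L) s0 m) {ys \<in> out_seqs n. code_dec s0 L ys \<noteq> m}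
    \<le> 16 * real n / (2 * real n - real L)\<^sup>2"
proof -
  let ?f = "\<lambda>ys. real (progress cw (parse s0 ys))"
  let ?G = "\<lambda>pre y. ?f pre - ?f (pre @ [y]) + 2"
  have "sum (out_prob (code_enc s0 L) s0 m) {ys \<in> out_seqs n. code_dec s0 L ys \<noteq> m}
      \<le> 4 * real n * 2\<^sup>2 / (2 * real n - real L)\<^sup>2"
  proof (rule supermartingale_deviation_le[OF valid_code_enc s0])
    show "\<bar>?G pre y\<bar> \<le> 2" for pre y
      using progress_parse_step_le[of cw "parse s0 pre" y] by (simp add: parse_snoc abs_le_iff)
    show "cond_mean (code_enc s0 L) s0 m ?G pre \<le> 0"
      if "0 < out_prob (code_enc s0 L) s0 m pre" for pre
    proof -
      have sx: "next_state (code_enc s0 L) s0 m pre \<in> alph" "code_enc s0 L m pre \<in> alph"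
        using s0 valid_code_enc by (auto simp: next_state_in_alph valid_encoder_def)
      show ?thesis
        using code_progress_mean[OF that] sum_ising_W[OF sx]
        by (simp add: cond_mean_def algebra_simps sum.distrib sum_subtractf flip: sum_distrib_left sum_distrib_right)
    qed
    show "0 < 2 * real n - real L"
      using assms by simp
  next
    fix ys
    assume ys: "ys \<in> out_seqs n" and pos: "0 < out_prob (code_enc s0 L) s0 m ys"
      and wrong: "code_dec s0 L ys \<noteq> m"
    have "?f ys < real L"
      using progress_lt_word_cost[OF pos] code_dec_eq[OF pos] wrong
        code_words_word_cost_le[of cw L] m by fastforce
    then show "2 * real n - real L \<le> incr_sum ?G ys"
      using ys incr_sum_telescope[of ?f 2 ys] by (simp add: out_seqs_def progress_def)
  qed
  then show ?thesis
    by simp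
qed

end

lemma length_code_words_ge_powr: "2 powr ((real L - 4) * cap / 2) \<le> real (length (code_words L))"
proof -
  have "(real L - 4) * cap / 2 = log 2 rho * (4 - real L)"
    by (simp add: cap_def field_simps)
  then have "2 powr ((real L - 4) * cap / 2) = (2 powr log 2 rho) powr (4 - real L)"
    by (simp add: powr_powr)
  also have "\<dots> = rho^4 / rho^L"
    using rho by (simp add: powr_diff powr_realpow powr_numeral)
  also have "\<dots> \<le> real (length (code_words L))"
    using length_code_words_ge[of L] rho by (simp add: divide_le_eq)
  finally show ?thesis .
qed

lemma avg_err_code_le:
  assumes s0: "s0 \<in> alph" and L: "real L < 2 * real n"
  shows "avg_err s0 n (length (code_words L)) (code_enc s0 L) (code_dec s0 L)
    \<le> 16 * real n / (2 * real n - real L)\<^sup>2"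
proof -
  let ?M = "length (code_words L)" and ?b = "16 * real n / (2 * real n - real L)\<^sup>2"
  have "0 < ?M"
    using length_code_words_ge[of L] rho by (cases ?M) auto
  have "(\<Sum>m<?M. sum (out_prob (code_enc s0 L) s0 m) {ys \<in> out_seqs n. code_dec s0 L ys \<noteq> m})
      \<le> real ?M * ?b"
    using code_error_le[OF s0 _ L] sum_mono[of "{..<?M}" _ "\<lambda>_. ?b"] by simp
  with \<open>0 < ?M\<close> show ?thesis
    unfolding avg_err_eq by (simp add: pos_divide_le_eq mult.commute)
qed

lemma code_rate_error:
  assumes s0: "s0 \<in> alph" and \<eta>: "0 < \<eta>" "\<eta> < 1" and n: "0 < n"
  defines "L \<equiv> nat \<lfloor>2 * real n * (1 - \<eta>)\<rfloor>"
  shows "2 powr (real n * ((1 - \<eta>) * cap) - 5 * cap / 2) \<le> real (length (code_words L))"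
    and "avg_err s0 n (length (code_words L)) (code_enc s0 L) (code_dec s0 L) \<le> 4 / (real n * \<eta>\<^sup>2)"
proof -
  have "0 \<le> 2 * real n * (1 - \<eta>)"
    using \<eta> by simp
  then have L: "2 * real n * (1 - \<eta>) - 1 < real L" "real L \<le> 2 * real n * (1 - \<eta>)"
    unfolding L_def by linarith+
  have "real n * ((1 - \<eta>) * cap) - 5 * cap / 2 = (2 * real n * (1 - \<eta>) - 5) * cap / 2"
    by (simp add: field_simps)
  also have "\<dots> \<le> (real L - 4) * cap / 2"
    using L cap_pos by (intro divide_right_mono mult_right_mono) auto
  finally have "2 powr (real n * ((1 - \<eta>) * cap) - 5 * cap / 2) \<le> 2 powr ((real L - 4) * cap / 2)"
    by (intro powr_mono) auto
  then show "2 powr (real n * ((1 - \<eta>) * cap) - 5 * cap / 2) \<le> real (length (code_words L))"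
    using length_code_words_ge_powr[of L] by linarith
  have gap: "2 * real n * \<eta> \<le> 2 * real n - real L"
    using L by (simp add: algebra_simps)
  have "0 < 2 * real n * \<eta>"
    using n \<eta> by simp
  then have "real L < 2 * real n"
    using gap by linarith
  then have "avg_err s0 n (length (code_words L)) (code_enc s0 L) (code_dec s0 L)
      \<le> 16 * real n / (2 * real n - real L)\<^sup>2"
    by (rule avg_err_code_le[OF s0])
  also have "\<dots> \<le> 16 * real n / (2 * real n * \<eta>)\<^sup>2"
  proof (rule divide_left_mono)
    show "(2 * real n * \<eta>)\<^sup>2 \<le> (2 * real n - real L)\<^sup>2"
      using gap \<open>0 < 2 * real n * \<eta>\<close> by (intro power_mono) auto
    show "0 < (2 * real n - real L)\<^sup>2 * (2 * real n * \<eta>)\<^sup>2"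
      using \<open>real L < 2 * real n\<close> \<open>0 < 2 * real n * \<eta>\<close> \<eta>(1) by (intro mult_pos_pos) simp_all
  qed simp
  also have "\<dots> = 4 / (real n * \<eta>\<^sup>2)"
    using n \<eta> by (simp add: field_simps power2_eq_square)
  finally show "avg_err s0 n (length (code_words L)) (code_enc s0 L) (code_dec s0 L) \<le> 4 / (real n * \<eta>\<^sup>2)" .
qed

lemma achievable_below_cap:
  assumes s0: "s0 \<in> alph" and R: "0 \<le> R" "R < cap"
  shows "achievable s0 R"
  unfolding achievable_iff_eventually
proof (intro conjI allI impI)
  show "0 \<le> R"
    by (rule R(1))
  fix \<epsilon> :: real
  assume \<epsilon>: "0 < \<epsilon>"
  define \<eta> where "\<eta> = (cap - R) / (2 * cap)"
  have \<eta>: "0 < \<eta>" "\<eta> < 1" "(1 - \<eta>) * cap = R + (cap - R) / 2"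
    using R cap_pos by (auto simp: \<eta>_def field_simps)
  show "\<forall>\<^sub>F n in sequentially. \<exists>M e d. 1 \<le> M \<and> 2 powr (real n * R) \<le> real M \<and>
      valid_encoder e \<and> avg_err s0 n M e d \<le> \<epsilon>"
    using eventually_real_gt_sequentially
  proof (rule eventually_mono)
    fix n
    assume "max (5 * cap / (cap - R)) (4 / (\<epsilon> * \<eta>\<^sup>2)) < real n"
    then have n: "5 * cap \<le> real n * (cap - R)" "4 \<le> real n * (\<epsilon> * \<eta>\<^sup>2)"
      using R \<epsilon> \<eta> by (simp_all add: pos_divide_less_eq mult.commute)
    then have "0 < n"
      by (cases n) simp_all
    define L where "L = nat \<lfloor>2 * real n * (1 - \<eta>)\<rfloor>"
    define M where "M = length (code_words L)"
    have "real n * R \<le> real n * ((1 - \<eta>) * cap) - 5 * cap / 2"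
      unfolding \<eta>(3) using n(1) by (simp add: algebra_simps)
    then have "2 powr (real n * R) \<le> 2 powr (real n * ((1 - \<eta>) * cap) - 5 * cap / 2)"
      by (intro powr_mono) auto
    then have rate: "2 powr (real n * R) \<le> real M"
      using code_rate_error(1)[OF s0 \<eta>(1,2) \<open>0 < n\<close>] unfolding M_def L_def by linarith
    then have "0 < real M"
      using powr_gt_zero[of 2 "real n * R"] by linarith
    then have M: "1 \<le> M"
      by simp
    have "4 / (real n * \<eta>\<^sup>2) \<le> \<epsilon>"
      using n(2) \<open>0 < n\<close> \<eta> by (simp add: divide_le_eq algebra_simps)
    then have "avg_err s0 n M (code_enc s0 L) (code_dec s0 L) \<le> \<epsilon>"
      using code_rate_error(2)[OF s0 \<eta>(1,2) \<open>0 < n\<close>] unfolding M_def L_def by linarith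
    then show "\<exists>M e d. 1 \<le> M \<and> 2 powr (real n * R) \<le> real M \<and> valid_encoder e \<and>
        avg_err s0 n M e d \<le> \<epsilon>"
      using M rate valid_code_enc by blast
  qed
qed

lemma fb_capacity_eq_cap:
  assumes s0: "s0 \<in> alph"
  shows "fb_capacity s0 = cap"
  unfolding fb_capacity_def
proof (rule cSup_eq_non_empty)
  show "{R. achievable s0 R} \<noteq> {}"
    using achievable_below_cap[OF s0 order_refl cap_pos] by auto
  show "R \<le> cap" if "R \<in> {R. achievable s0 R}" for R
    using achievable_le_cap[OF s0] that by simp
  show "cap \<le> y" if upper: "\<And>R. R \<in> {R. achievable s0 R} \<Longrightarrow> R \<le> y" for y
    using cap_pos by (rule dense_le_bounded) (use upper achievable_below_cap[OF s0] in auto)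
qed

theorem theorem3:
  assumes "s0 \<in> alph"
  shows "fb_capacity s0 = (SUP p \<in> {0..1}. ising3_rate p)
    \<and> \<bar>fb_capacity s0 - 0.961227\<bar> \<le> 0.0000005
    \<and> (\<exists>p\<in>{0..1}. ising3_rate p = fb_capacity s0 \<and> \<bar>p - 0.263805\<bar> \<le> 0.0000005)"
  unfolding fb_capacity_eq_cap[OF assms] SUP_ising3_rate
  using rho4_mem_unit ising3_rate_rho4 cap_approx rho4_approx by blast

end
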